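(* Let $X=X(\Delta)$ be a smooth complete toric variety. If $\mathcal{I}_1\ne\mathcal{I}_2$ are two centred primitive collections of $\Delta$, then $\mathcal{I}_1\cap\mathcal{I}_2=\varnothing$.
   Context: Rays of $\Delta$ are identified with their primitive generators. A primitive collection is a set $\mathcal{I}$ of rays whose members do not generate a cone of $\Delta$ while the members of each proper subset do; it is centred if $\sum_{\rho\in\mathcal{I}}\rho=0$. *)

theory Defs
  imports "HOL-Analysis.Analysis"
begin

text \<open>The lattice N = Z^n inside N_R = R^n, with n = CARD('n).\<close>
definition lattice_vec :: "real^'n \<Rightarrow> bool" where
  "lattice_vec v \<longleftrightarrow> (\<forall>i. v $ i \<in> \<int>)"

definition lattice_basis :: "(real^'n) set \<Rightarrow> bool" where
  "lattice_basis B \<longleftrightarrow> finite B \<and> (\<forall>b\<in>B. lattice_vec b) \<and> independent B \<and>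
     (\<forall>v. lattice_vec v \<longrightarrow> (\<exists>c. (\<forall>b\<in>B. c b \<in> \<int>) \<and> v = (\<Sum>b\<in>B. c b *\<^sub>R b)))"

definition pos_hull :: "(real^'n) set \<Rightarrow> (real^'n) set" where
  "pos_hull S = {\<Sum>v\<in>S. c v *\<^sub>R v | c. \<forall>v\<in>S. c v \<ge> 0}"

text \<open>A smooth fan is encoded by the set of its cones, each cone being recorded by
  its set of ray generators (primitive lattice vectors).  Fan axioms: finitely many cones,
  closed under faces (for simplicial cones, faces = subsets of generators), two cones
  meet in a common face.\<close>
definition smooth_complete_fan :: "(real^'n) set set \<Rightarrow> bool" where
  "smooth_complete_fan \<Delta> \<longleftrightarrow>
     finite \<Delta> \<and>
     (\<forall>\<sigma>\<in>\<Delta>. \<exists>B. lattice_basis B \<and> \<sigma> \<subseteq> B) \<and>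
     (\<forall>\<sigma>\<in>\<Delta>. \<forall>\<tau>. \<tau> \<subseteq> \<sigma> \<longrightarrow> \<tau> \<in> \<Delta>) \<and>
     (\<forall>\<sigma>\<in>\<Delta>. \<forall>\<tau>\<in>\<Delta>. pos_hull \<sigma> \<inter> pos_hull \<tau> = pos_hull (\<sigma> \<inter> \<tau>)) \<and>
     (\<Union>\<sigma>\<in>\<Delta>. pos_hull \<sigma>) = UNIV"

text \<open>Rays of the fan, identified with their primitive generators.\<close>
definition fan_rays :: "(real^'n) set set \<Rightarrow> (real^'n) set" where
  "fan_rays \<Delta> = {v. {v} \<in> \<Delta>}"

definition generates_cone :: "(real^'n) set set \<Rightarrow> (real^'n) set \<Rightarrow> bool" where
  "generates_cone \<Delta> I \<longleftrightarrow> (\<exists>\<sigma>\<in>\<Delta>. pos_hull I = pos_hull \<sigma>)"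

definition primitive_collection :: "(real^'n) set set \<Rightarrow> (real^'n) set \<Rightarrow> bool" where
  "primitive_collection \<Delta> I \<longleftrightarrow> I \<subseteq> fan_rays \<Delta> \<and> \<not> generates_cone \<Delta> I \<and>
     (\<forall>J. J \<subset> I \<longrightarrow> generates_cone \<Delta> J)"

definition centred :: "(real^'n) set \<Rightarrow> bool" where
  "centred I \<longleftrightarrow> (\<Sum>\<rho>\<in>I. \<rho>) = 0"

end

theory Submission
  imports Defs
begin

text \<open>If \<rho> lies in both collections, then I1 - {\<rho>} and I2 - {\<rho>} are proper subsets and so
  generate cones; since a ray lying in a cone of the fan is one of its generators, they are
  contained in cones \<sigma> and \<tau>. Centredness gives both of them the sum -\<rho>, which therefore lies in
  pos_hull \<sigma> \<inter> pos_hull \<tau> = pos_hull (\<sigma> \<inter> \<tau>). Smoothness makes the generators of each cone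
  linearly independent, so the expansion of -\<rho> over \<sigma> \<inter> \<tau> is unique and both I1 - {\<rho>} and
  I2 - {\<rho>} are its support. Hence they coincide, and so do I1 and I2.\<close>

lemma independent_sum_coeffs_eq:
  fixes S :: "'a::real_vector set"
  assumes "finite S" "independent S"
    and "(\<Sum>v\<in>S. a v *\<^sub>R v) = (\<Sum>v\<in>S. b v *\<^sub>R v)" "x \<in> S"
  shows "a x = b x"
proof (rule ccontr)
  assume "a x \<noteq> b x"
  have "(\<Sum>v\<in>S. (a v - b v) *\<^sub>R v) = 0"
    using assms(3) by (simp add: scaleR_diff_left sum_subtractf)
  then have "dependent S"
    unfolding real_vector.dependent_finite[OF assms(1)]
    using assms(4) \<open>a x \<noteq> b x\<close> by (intro exI[of _ "\<lambda>v. a v - b v"]) auto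
  with assms(2) show False ..
qed

lemma sum_scaleR_restrict:
  fixes f :: "'a::real_vector \<Rightarrow> real"
  assumes "finite S" "T \<subseteq> S"
  shows "(\<Sum>v\<in>T. f v *\<^sub>R v) = (\<Sum>v\<in>S. (if v \<in> T then f v else 0) *\<^sub>R v)"
  using assms by (simp add: if_distrib[of "\<lambda>c. c *\<^sub>R _"] sum.inter_restrict[symmetric] Int_absorb1
      cong: if_cong)

lemma independent_subset_sum_eq_support:
  fixes S :: "'a::real_vector set"
  assumes "finite S" "independent S" "T \<subseteq> S" "C \<subseteq> S"
    and "(\<Sum>v\<in>T. v) = (\<Sum>v\<in>C. c v *\<^sub>R v)"
  shows "T = {v \<in> C. c v \<noteq> 0}"
proof -
  have sums: "(\<Sum>v\<in>S. (if v \<in> T then 1 else 0) *\<^sub>R v) =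
      (\<Sum>v\<in>S. (if v \<in> C then c v else 0) *\<^sub>R v)"
    using assms(5) sum_scaleR_restrict[OF assms(1,3), of "\<lambda>_. 1"]
      sum_scaleR_restrict[OF assms(1,4), of c] by simp
  have coeffs: "(if v \<in> T then 1 else 0) = (if v \<in> C then c v else 0)" if "v \<in> S" for v
    using independent_sum_coeffs_eq[OF assms(1,2) sums that] .
  show ?thesis
  proof (intro set_eqI iffI)
    fix v assume "v \<in> T"
    then show "v \<in> {v \<in> C. c v \<noteq> 0}"
      using coeffs[of v] assms(3) by (auto split: if_splits)
  next
    fix v assume "v \<in> {v \<in> C. c v \<noteq> 0}"
    then show "v \<in> T"
      using coeffs[of v] assms(4) by (auto split: if_splits)
  qed
qed

lemma sum_subset_in_pos_hull:
  fixes T :: "(real^'n) set"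
  assumes "finite S" "T \<subseteq> S"
  shows "(\<Sum>v\<in>T. v) \<in> pos_hull S"
  unfolding pos_hull_def
  using sum_scaleR_restrict[OF assms, of "\<lambda>_. 1"] by force

lemma pos_hull_empty: "pos_hull ({} :: (real^'n) set) = {0}"
  unfolding pos_hull_def by auto

lemma smooth_complete_fanD:
  assumes "smooth_complete_fan \<Delta>"
  shows "finite \<Delta>"
    and "\<sigma> \<in> \<Delta> \<Longrightarrow> \<exists>B. lattice_basis B \<and> \<sigma> \<subseteq> B"
    and "\<sigma> \<in> \<Delta> \<Longrightarrow> \<tau> \<in> \<Delta> \<Longrightarrow> pos_hull \<sigma> \<inter> pos_hull \<tau> = pos_hull (\<sigma> \<inter> \<tau>)"
  using assms unfolding smooth_complete_fan_def by simp_all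

lemma smooth_complete_fan_cone_finite_independent:
  assumes "smooth_complete_fan \<Delta>" "\<sigma> \<in> \<Delta>"
  shows "finite \<sigma>" "independent \<sigma>"
proof -
  obtain B where "lattice_basis B" "\<sigma> \<subseteq> B"
    using smooth_complete_fanD(2)[OF assms] by blast
  then show "finite \<sigma>" "independent \<sigma>"
    unfolding lattice_basis_def by (meson finite_subset real_vector.independent_mono)+
qed

lemma smooth_complete_fan_finite_rays:
  assumes "smooth_complete_fan \<Delta>"
  shows "finite (fan_rays \<Delta>)"
proof -
  have "finite (\<Union>\<Delta>)"
    using smooth_complete_fanD(1)[OF assms] smooth_complete_fan_cone_finite_independent(1)[OF assms]
    by blast
  moreover have "fan_rays \<Delta> \<subseteq> \<Union>\<Delta>"
    unfolding fan_rays_def by blast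
  ultimately show ?thesis by (rule finite_subset[rotated])
qed

lemma fan_ray_in_pos_hull_imp_mem:
  assumes F: "smooth_complete_fan \<Delta>" and "v \<in> fan_rays \<Delta>" "\<sigma> \<in> \<Delta>"
    and "v \<in> pos_hull \<sigma>"
  shows "v \<in> \<sigma>"
proof (rule ccontr)
  assume "v \<notin> \<sigma>"
  have ray: "{v} \<in> \<Delta>"
    using assms(2) unfolding fan_rays_def by simp
  have "v \<in> pos_hull {v} \<inter> pos_hull \<sigma>"
    using sum_subset_in_pos_hull[of "{v}" "{v}"] assms(4) by simp
  also have "\<dots> = pos_hull ({v} \<inter> \<sigma>)"
    using smooth_complete_fanD(3)[OF F ray assms(3)] .
  finally have "v = 0"
    using \<open>v \<notin> \<sigma>\<close> by (simp add: pos_hull_empty)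
  then show False
    using smooth_complete_fan_cone_finite_independent(2)[OF F ray] real_vector.dependent_zero by auto
qed

lemma generates_cone_subset_cone:
  assumes F: "smooth_complete_fan \<Delta>" and "A \<subseteq> fan_rays \<Delta>" "generates_cone \<Delta> A"
  obtains \<sigma> where "\<sigma> \<in> \<Delta>" "A \<subseteq> \<sigma>"
proof -
  obtain \<sigma> where \<sigma>: "\<sigma> \<in> \<Delta>" "pos_hull A = pos_hull \<sigma>"
    using assms(3) unfolding generates_cone_def by blast
  have "finite A"
    using assms(2) smooth_complete_fan_finite_rays[OF F] by (rule finite_subset)
  have "v \<in> \<sigma>" if "v \<in> A" for v
    using fan_ray_in_pos_hull_imp_mem[OF F _ \<sigma>(1)] sum_subset_in_pos_hull[OF \<open>finite A\<close>, of "{v}"]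
      \<sigma>(2) assms(2) that by auto
  then show ?thesis
    using that \<sigma>(1) by blast
qed

lemma smooth_complete_fan_sum_eq_imp_eq:
  assumes F: "smooth_complete_fan \<Delta>"
    and \<sigma>: "\<sigma> \<in> \<Delta>" "A \<subseteq> \<sigma>" and \<tau>: "\<tau> \<in> \<Delta>" "B \<subseteq> \<tau>"
    and sums: "(\<Sum>v\<in>A. v) = (\<Sum>v\<in>B. v)"
  shows "A = B"
proof -
  note \<sigma>_indep = smooth_complete_fan_cone_finite_independent[OF F \<sigma>(1)]
  note \<tau>_indep = smooth_complete_fan_cone_finite_independent[OF F \<tau>(1)]
  have "(\<Sum>v\<in>A. v) \<in> pos_hull \<sigma> \<inter> pos_hull \<tau>"
    using sum_subset_in_pos_hull[OF \<sigma>_indep(1) \<sigma>(2)] sum_subset_in_pos_hull[OF \<tau>_indep(1) \<tau>(2)]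
      sums by simp
  also have "\<dots> = pos_hull (\<sigma> \<inter> \<tau>)"
    using smooth_complete_fanD(3)[OF F \<sigma>(1) \<tau>(1)] .
  finally obtain c where c: "(\<Sum>v\<in>A. v) = (\<Sum>v\<in>\<sigma> \<inter> \<tau>. c v *\<^sub>R v)"
    unfolding pos_hull_def by blast
  have "A = {v \<in> \<sigma> \<inter> \<tau>. c v \<noteq> 0}"
    using independent_subset_sum_eq_support[OF \<sigma>_indep \<sigma>(2) _ c] by blast
  moreover have "B = {v \<in> \<sigma> \<inter> \<tau>. c v \<noteq> 0}"
    using independent_subset_sum_eq_support[OF \<tau>_indep \<tau>(2), of "\<sigma> \<inter> \<tau>" c] c sums by auto
  ultimately show ?thesis by simp
qed

lemma primitive_collection_remove_in_cone:
  assumes F: "smooth_complete_fan \<Delta>" and I: "primitive_collection \<Delta> I" and "\<rho> \<in> I"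
  obtains \<sigma> where "\<sigma> \<in> \<Delta>" "I - {\<rho>} \<subseteq> \<sigma>"
proof -
  have "I - {\<rho>} \<subset> I"
    using \<open>\<rho> \<in> I\<close> by blast
  then have "generates_cone \<Delta> (I - {\<rho>})" "I - {\<rho>} \<subseteq> fan_rays \<Delta>"
    using I unfolding primitive_collection_def by blast+
  then show ?thesis
    using generates_cone_subset_cone[OF F] that by blast
qed

lemma centred_sum_remove:
  assumes "finite I" "centred I" "\<rho> \<in> I"
  shows "(\<Sum>v\<in>I - {\<rho>}. v) = - \<rho>"
  using assms unfolding centred_def by (simp add: sum.remove eq_neg_iff_add_eq_0 add.commute)

theorem lemma6p4:
  fixes \<Delta> :: "(real^'n) set set" and I1 I2 :: "(real^'n) set"
  assumes "smooth_complete_fan \<Delta>"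
    and "primitive_collection \<Delta> I1" and "centred I1"
    and "primitive_collection \<Delta> I2" and "centred I2"
    and "I1 \<noteq> I2"
  shows "I1 \<inter> I2 = {}"
proof (rule ccontr)
  assume "I1 \<inter> I2 \<noteq> {}"
  then obtain \<rho> where \<rho>: "\<rho> \<in> I1" "\<rho> \<in> I2" by blast
  have "finite I1" "finite I2"
    using assms(2,4) smooth_complete_fan_finite_rays[OF assms(1)]
    unfolding primitive_collection_def by (auto intro: finite_subset)
  obtain \<sigma> where "\<sigma> \<in> \<Delta>" "I1 - {\<rho>} \<subseteq> \<sigma>"
    using primitive_collection_remove_in_cone[OF assms(1,2) \<rho>(1)] .
  moreover obtain \<tau> where "\<tau> \<in> \<Delta>" "I2 - {\<rho>} \<subseteq> \<tau>"
    using primitive_collection_remove_in_cone[OF assms(1,4) \<rho>(2)] .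
  moreover have "(\<Sum>v\<in>I1 - {\<rho>}. v) = (\<Sum>v\<in>I2 - {\<rho>}. v)"
    using centred_sum_remove[OF \<open>finite I1\<close> assms(3) \<rho>(1)]
      centred_sum_remove[OF \<open>finite I2\<close> assms(5) \<rho>(2)] by simp
  ultimately have "I1 - {\<rho>} = I2 - {\<rho>}"
    by (rule smooth_complete_fan_sum_eq_imp_eq[OF assms(1)])
  then show False
    using \<rho> assms(6) by (metis insert_Diff)
qed

end
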